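(* Let $G=(K\cup I,E)$ be a split graph and $(V,\mathcal{F})$ the split graph vertex shelling antimatroid defined on $G$. Then for every $i\in I$, $$\mathcal{F}_i=\{\operatorname{fos}(i)\cup H:\ H \text{ is a filter of } (\operatorname{ufs}(i),\prec),\ H\cap K\neq\varnothing\}.$$
   Context: A split graph $G=(K\cup I,E)$ is a finite simple graph whose vertex set $V=K\cup I$ comes with a fixed partition into a clique $K$ and an independent set $I$. We write $u\sim v$ for adjacency; for $F\subseteq V$, $N(F)$ is the set of vertices of $V\setminus F$ adjacent to some vertex of $F$, and $N(v)=N(\{v\})$. A vertex is simplicial if its neighbours induce a clique. The split graph vertex shelling antimatroid of $G$ is $(V,\mathcal{F})$ where $F\subseteq V$ is feasible iff there is an ordering $f_1,\dots,f_{|F|}$ of $F$ such that each $f_j$ is simplicial in $G$ minus $\{f_1,\dots,f_{j-1}\}$ (the empty set is feasible). For $i\in I$, $\mathcal{F}_i$ is the family of feasible sets $F$ with $i\in N(F)$. Define $\operatorname{fos}(i)=\{k\in K: k\not\sim i\}\cup\{i'\in I: N(i')\not\subseteq N(i)\}$ and $\operatorname{ufs}(i)=V\setminus(\operatorname{fos}(i)\cup\{i\})=\big(\{k\in K:k\sim i\}\cup\{i'\in I: N(i')\subseteq N(i)\}\big)\setminus\{i\}$. The strict order $\prec$ on $K\cup I$ is $u\prec v$ iff $u\in K$, $v\in I$, $u\sim v$; $(\operatorname{ufs}(i),\prec)$ is its restriction to $\operatorname{ufs}(i)$. A filter of a poset is a subset $H$ such that $a\in H$ and $a\prec b$ imply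 $b\in H$. *)

theory Defs
  imports Main
begin

definition split_graph :: "'a set \<Rightarrow> 'a set \<Rightarrow> ('a \<Rightarrow> 'a \<Rightarrow> bool) \<Rightarrow> bool" where
  "split_graph K I adj \<longleftrightarrow>
     finite K \<and> finite I \<and> K \<inter> I = {} \<and>
     (\<forall>u v. adj u v \<longrightarrow> adj v u) \<and>
     (\<forall>u. \<not> adj u u) \<and>
     (\<forall>u v. adj u v \<longrightarrow> u \<in> K \<union> I \<and> v \<in> K \<union> I) \<and>
     (\<forall>u\<in>K. \<forall>v\<in>K. u \<noteq> v \<longrightarrow> adj u v) \<and>
     (\<forall>u\<in>I. \<forall>v\<in>I. \<not> adj u v)"

definition nbhd :: "'a set \<Rightarrow> 'a set \<Rightarrow> ('a \<Rightarrow> 'a \<Rightarrow> bool) \<Rightarrow> 'a set \<Rightarrow> 'a set" where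
  "nbhd K I adj F = {v \<in> (K \<union> I) - F. \<exists>u\<in>F. adj u v}"

definition simplicial_in :: "('a \<Rightarrow> 'a \<Rightarrow> bool) \<Rightarrow> 'a set \<Rightarrow> 'a \<Rightarrow> bool" where
  "simplicial_in adj W v \<longleftrightarrow> v \<in> W \<and>
     (\<forall>x\<in>W. \<forall>y\<in>W. adj v x \<and> adj v y \<and> x \<noteq> y \<longrightarrow> adj x y)"

definition feasible :: "'a set \<Rightarrow> 'a set \<Rightarrow> ('a \<Rightarrow> 'a \<Rightarrow> bool) \<Rightarrow> 'a set \<Rightarrow> bool" where
  "feasible K I adj F \<longleftrightarrow> (\<exists>xs. distinct xs \<and> set xs = F \<and>
     (\<forall>j < length xs. simplicial_in adj ((K \<union> I) - set (take j xs)) (xs ! j)))"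

definition F_of :: "'a set \<Rightarrow> 'a set \<Rightarrow> ('a \<Rightarrow> 'a \<Rightarrow> bool) \<Rightarrow> 'a \<Rightarrow> 'a set set" where
  "F_of K I adj i = {F. feasible K I adj F \<and> i \<in> nbhd K I adj F}"

definition fos :: "'a set \<Rightarrow> 'a set \<Rightarrow> ('a \<Rightarrow> 'a \<Rightarrow> bool) \<Rightarrow> 'a \<Rightarrow> 'a set" where
  "fos K I adj i = {k \<in> K. \<not> adj k i} \<union>
     {i' \<in> I. \<not> (nbhd K I adj {i'} \<subseteq> nbhd K I adj {i})}"

definition ufs :: "'a set \<Rightarrow> 'a set \<Rightarrow> ('a \<Rightarrow> 'a \<Rightarrow> bool) \<Rightarrow> 'a \<Rightarrow> 'a set" where
  "ufs K I adj i = (K \<union> I) - (fos K I adj i \<union> {i})"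

definition prec :: "'a set \<Rightarrow> 'a set \<Rightarrow> ('a \<Rightarrow> 'a \<Rightarrow> bool) \<Rightarrow> 'a \<Rightarrow> 'a \<Rightarrow> bool" where
  "prec K I adj u v \<longleftrightarrow> u \<in> K \<and> v \<in> I \<and> adj u v"

definition is_filter :: "('a \<Rightarrow> 'a \<Rightarrow> bool) \<Rightarrow> 'a set \<Rightarrow> 'a set \<Rightarrow> bool" where
  "is_filter r S H \<longleftrightarrow> H \<subseteq> S \<and> (\<forall>a\<in>H. \<forall>b\<in>S. r a b \<longrightarrow> b \<in> H)"

end

theory Submission
  imports Defs
begin

text \<open>In a split graph every independent vertex is simplicial, and a clique vertex \<open>k\<close> is
simplicial exactly when it has at most one remaining independent neighbour \<open>x\<close>, and \<open>x\<close> is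
adjacent to every remaining clique vertex. Let \<open>F\<close> be feasible and \<open>k\<^sub>0 \<in> F\<close> a clique
neighbour of \<open>i\<close>. When \<open>k\<^sub>0\<close> is removed, \<open>i\<close> is still present and hence the only independent
neighbour of \<open>k\<^sub>0\<close>, so every clique non-neighbour \<open>k\<close> of \<open>i\<close> was removed earlier; and when \<open>k\<close> was
removed, no independent neighbour \<open>x \<notin> F\<close> of \<open>k\<close> was present, since \<open>k\<^sub>0\<close> would then be
adjacent to \<open>x\<close> as well. Thus \<open>fos(i) \<subseteq> F\<close>. In the same way a clique neighbour of \<open>i\<close> in \<open>F\<close>
sees \<open>i\<close> at its removal, so its other independent neighbours are in \<open>F\<close>: the filter
property. Conversely \<open>fos(i) \<union> H\<close> is shelled by removing its independent vertices, then the
clique non-neighbours of \<open>i\<close>, which now have no independent neighbours, and finally \<open>H \<inter> K\<close>,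
whose only remaining independent neighbour is \<open>i\<close>.\<close>

lemma split_graphD:
  assumes "split_graph K I adj"
  shows "finite (K \<union> I)" "K \<inter> I = {}" "adj u v \<Longrightarrow> adj v u" "\<not> adj u u"
    "adj u v \<Longrightarrow> u \<in> K \<union> I"
    "u \<in> K \<Longrightarrow> v \<in> K \<Longrightarrow> u \<noteq> v \<Longrightarrow> adj u v"
    "u \<in> I \<Longrightarrow> v \<in> I \<Longrightarrow> \<not> adj u v"
  using assms unfolding split_graph_def by blast+

lemma split_graph_adj_I:
  assumes "split_graph K I adj" "x \<in> I" "adj x y"
  shows "y \<in> K"
  using split_graphD[OF assms(1)] assms(2,3) by blast

lemma nbhd_singleton:
  assumes "split_graph K I adj"
  shows "nbhd K I adj {v} = {u. adj v u}"
  using split_graphD(3-5)[OF assms] unfolding nbhd_def by blast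

lemma mem_fos_iff:
  assumes "split_graph K I adj"
  shows "x \<in> fos K I adj i \<longleftrightarrow>
    x \<in> K \<and> \<not> adj x i \<or> x \<in> I \<and> (\<exists>k. adj x k \<and> \<not> adj i k)"
  unfolding fos_def nbhd_singleton[OF assms] by blast

lemma mem_ufs_K_iff:
  assumes "split_graph K I adj" "i \<in> I" "k \<in> K"
  shows "k \<in> ufs K I adj i \<longleftrightarrow> adj k i"
proof -
  have "k \<noteq> i" "k \<notin> I" using assms split_graphD(2)[OF assms(1)] by blast+
  then show ?thesis using assms(3) by (simp add: ufs_def mem_fos_iff[OF assms(1)])
qed

lemma simplicial_in_mono:
  "simplicial_in adj W v \<Longrightarrow> v \<in> W' \<Longrightarrow> W' \<subseteq> W \<Longrightarrow> simplicial_in adj W' v"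
  unfolding simplicial_in_def by blast

lemma simplicial_in_I:
  assumes "split_graph K I adj" "v \<in> I" "v \<in> W"
  shows "simplicial_in adj W v"
  unfolding simplicial_in_def
  using assms split_graph_adj_I[OF assms(1,2)] split_graphD(6)[OF assms(1)] by blast

lemma simplicial_in_unique_I_nbr:
  assumes "split_graph K I adj" and "simplicial_in adj W k"
    and "x \<in> I \<inter> W" "adj k x" and "y \<in> I \<inter> W" "adj k y"
  shows "y = x"
  using assms split_graphD(7)[OF assms(1)] unfolding simplicial_in_def by blast

lemma simplicial_in_K_common_nbr:
  assumes sg: "split_graph K I adj" and s: "simplicial_in adj W k" and k: "k \<in> K"
    and x: "x \<in> I \<inter> W" "adj k x" and k': "k' \<in> K \<inter> W" "k' \<noteq> k"
  shows "adj k' x"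
proof -
  have "x \<noteq> k'" using x k' split_graphD(2)[OF sg] by blast
  then have "adj x k'" using s x k' k split_graphD(6)[OF sg] unfolding simplicial_in_def by blast
  then show ?thesis using split_graphD(3)[OF sg] by blast
qed

lemma simplicial_in_K_iff:
  assumes sg: "split_graph K I adj" and k: "k \<in> K"
  shows "simplicial_in adj W k \<longleftrightarrow> k \<in> W \<and>
    (\<forall>x\<in>I \<inter> W. adj k x \<longrightarrow> (\<forall>y\<in>I \<inter> W. adj k y \<longrightarrow> y = x) \<and>
                               (\<forall>k'\<in>K \<inter> W. k' \<noteq> k \<longrightarrow> adj k' x))"
    (is "_ \<longleftrightarrow> k \<in> W \<and> ?nbrs")
proof
  assume "simplicial_in adj W k"
  then show "k \<in> W \<and> ?nbrs"
    using simplicial_in_unique_I_nbr[OF sg] simplicial_in_K_common_nbr[OF sg _ k]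
    unfolding simplicial_in_def by blast
next
  assume "k \<in> W \<and> ?nbrs"
  then have "k \<in> W"
    and uniq: "\<And>x y. x \<in> I \<inter> W \<Longrightarrow> adj k x \<Longrightarrow> y \<in> I \<inter> W \<Longrightarrow> adj k y \<Longrightarrow> y = x"
    and common: "\<And>x k'. x \<in> I \<inter> W \<Longrightarrow> adj k x \<Longrightarrow> k' \<in> K \<inter> W \<Longrightarrow> k' \<noteq> k \<Longrightarrow> adj k' x"
    by blast+
  show "simplicial_in adj W k"
    unfolding simplicial_in_def
  proof (intro conjI ballI impI)
    fix x y assume "x \<in> W" "y \<in> W" and xy: "adj k x \<and> adj k y \<and> x \<noteq> y"
    have "x \<in> K \<union> I" "y \<in> K \<union> I" "x \<noteq> k" "y \<noteq> k"
      using xy split_graphD(3-5)[OF sg] by metis+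
    then consider "x \<in> I" "y \<in> K" | "x \<in> K" "y \<in> I" | "x \<in> K" "y \<in> K"
      using uniq \<open>x \<in> W\<close> \<open>y \<in> W\<close> xy by blast
    then show "adj x y"
    proof cases
      case 1
      then show ?thesis
        using common[of x y] \<open>x \<in> W\<close> \<open>y \<in> W\<close> \<open>y \<noteq> k\<close> xy split_graphD(3)[OF sg] by blast
    next
      case 2
      then show ?thesis using common[of y x] \<open>x \<in> W\<close> \<open>y \<in> W\<close> \<open>x \<noteq> k\<close> xy by blast
    next
      case 3
      then show ?thesis using xy split_graphD(6)[OF sg] by blast
    qed
  qed fact
qed

definition shelling_seq :: "('a \<Rightarrow> 'a \<Rightarrow> bool) \<Rightarrow> 'a set \<Rightarrow> 'a list \<Rightarrow> bool" where
  "shelling_seq adj W xs \<longleftrightarrow> distinct xs \<and>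
     (\<forall>j < length xs. simplicial_in adj (W - set (take j xs)) (xs ! j))"

lemma feasible_iff_shelling_seq:
  "feasible K I adj F \<longleftrightarrow> (\<exists>xs. shelling_seq adj (K \<union> I) xs \<and> set xs = F)"
  unfolding feasible_def shelling_seq_def by blast

lemma shelling_seq_simplicial:
  assumes "shelling_seq adj W (ys @ x # zs)"
  shows "simplicial_in adj (W - set ys) x"
  using assms unfolding shelling_seq_def
  by (auto dest: spec[of _ "length ys"] simp: nth_append)

lemma shelling_seqE:
  assumes "shelling_seq adj W xs" and "x \<in> set xs"
  obtains ys zs where "xs = ys @ x # zs" and "simplicial_in adj (W - set ys) x"
proof -
  obtain ys zs where "xs = ys @ x # zs" using split_list[OF assms(2)] by blast
  moreover have "simplicial_in adj (W - set ys) x"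
    using shelling_seq_simplicial[of adj W ys x zs] assms(1) \<open>xs = ys @ x # zs\<close> by simp
  ultimately show ?thesis by (rule that)
qed

lemma shelling_seq_subset:
  assumes "shelling_seq adj W xs"
  shows "set xs \<subseteq> W"
proof
  fix x assume "x \<in> set xs"
  then obtain ys where "simplicial_in adj (W - set ys) x" using shelling_seqE[OF assms] by metis
  then show "x \<in> W" unfolding simplicial_in_def by simp
qed

lemma shelling_seq_append:
  assumes xs: "shelling_seq adj W xs" and ys: "shelling_seq adj (W - set xs) ys"
  shows "shelling_seq adj W (xs @ ys)"
  unfolding shelling_seq_def
proof (intro conjI allI impI)
  show "distinct (xs @ ys)"
    using xs ys shelling_seq_subset[OF ys] unfolding shelling_seq_def by auto
  fix j assume j: "j < length (xs @ ys)"
  show "simplicial_in adj (W - set (take j (xs @ ys))) ((xs @ ys) ! j)"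
  proof (cases "j < length xs")
    case True
    then show ?thesis using xs unfolding shelling_seq_def by (simp add: nth_append)
  next
    case False
    then have "j - length xs < length ys" using j by simp
    moreover have "W - set (take j (xs @ ys)) = W - set xs - set (take (j - length xs) ys)"
      using False by auto
    ultimately show ?thesis using ys False unfolding shelling_seq_def by (simp add: nth_append)
  qed
qed

lemma shelling_seq_of_simplicial:
  assumes "distinct xs" and "\<forall>x\<in>set xs. simplicial_in adj W x"
  shows "shelling_seq adj W xs"
  unfolding shelling_seq_def
proof (intro conjI allI impI)
  fix j assume j: "j < length xs"
  have "distinct (take j xs @ xs ! j # drop (Suc j) xs)"
    using assms(1) by (simp only: id_take_nth_drop[OF j, symmetric])
  then have "xs ! j \<notin> set (take j xs)" by simp
  moreover have s: "simplicial_in adj W (xs ! j)" using assms(2) j by simp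
  moreover have "xs ! j \<in> W" using s unfolding simplicial_in_def by simp
  ultimately show "simplicial_in adj (W - set (take j xs)) (xs ! j)"
    by (intro simplicial_in_mono[OF s]) auto
qed fact

lemma feasible_union_simplicial:
  assumes "feasible K I adj F" and "finite S"
    and "\<forall>x\<in>S. simplicial_in adj (K \<union> I - F) x"
  shows "feasible K I adj (F \<union> S)"
proof -
  obtain xs where xs: "shelling_seq adj (K \<union> I) xs" "set xs = F"
    using assms(1) unfolding feasible_iff_shelling_seq by blast
  obtain ys where ys: "distinct ys" "set ys = S"
    using finite_distinct_list[OF assms(2)] by blast
  have "shelling_seq adj (K \<union> I - set xs) ys"
    using shelling_seq_of_simplicial ys assms(3) xs(2) by blast
  then have "shelling_seq adj (K \<union> I) (xs @ ys)"
    using shelling_seq_append xs(1) by blast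
  then show ?thesis
    using feasible_iff_shelling_seq xs(2) ys(2) by fastforce
qed

lemma feasible_subset:
  assumes "feasible K I adj F"
  shows "F \<subseteq> K \<union> I"
  using assms shelling_seq_subset unfolding feasible_iff_shelling_seq by blast

lemma feasible_empty: "feasible K I adj {}"
  unfolding feasible_def by simp

lemma fos_subset_feasible:
  assumes sg: "split_graph K I adj" and i: "i \<in> I"
    and F: "feasible K I adj F" and iN: "i \<in> nbhd K I adj F"
  shows "fos K I adj i \<subseteq> F"
proof -
  obtain xs where xs: "shelling_seq adj (K \<union> I) xs" "set xs = F"
    using F unfolding feasible_iff_shelling_seq by blast
  have iF: "i \<notin> F" using iN unfolding nbhd_def by blast
  obtain k0 where k0: "k0 \<in> F" "k0 \<in> K" "adj k0 i"
    using iN split_graph_adj_I[OF sg i] split_graphD(3)[OF sg] unfolding nbhd_def by blast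
  then obtain ps qs where split: "xs = ps @ k0 # qs" and s0: "simplicial_in adj (K \<union> I - set ps) k0"
    using shelling_seqE[OF xs(1)] xs(2) by blast
  have iW0: "i \<in> I \<inter> (K \<union> I - set ps)" using i iF xs(2) split by auto
  have K_nonadj: "k \<in> set ps" if k: "k \<in> K" "\<not> adj k i" for k
  proof (rule ccontr)
    assume "k \<notin> set ps"
    then have "k \<in> K \<inter> (K \<union> I - set ps)" "k \<noteq> k0" using k k0(3) by auto
    then have "adj k i" by (intro simplicial_in_K_common_nbr[OF sg s0 k0(2) iW0 k0(3)])
    with k show False by blast
  qed
  have I_fos: "i' \<in> F" if i': "i' \<in> I" "adj i' k'" "\<not> adj i k'" for i' k'
  proof (rule ccontr)
    assume i'F: "i' \<notin> F"
    have "k' \<in> K" using split_graph_adj_I[OF sg i'(1,2)] .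
    have "\<not> adj k' i" "adj k' i'" using i'(2,3) split_graphD(3)[OF sg] by blast+
    then obtain ps1 ps2 where ps: "ps = ps1 @ k' # ps2"
      using K_nonadj[OF \<open>k' \<in> K\<close>] split_list by metis
    have s': "simplicial_in adj (K \<union> I - set ps1) k'"
      using shelling_seq_simplicial[of adj "K \<union> I" ps1 k' "ps2 @ k0 # qs"] xs(1) split ps by simp
    have "k0 \<notin> set ps1" using xs(1) split ps unfolding shelling_seq_def by simp
    moreover have "set ps1 \<subseteq> F" using xs(2) split ps by auto
    ultimately have "k0 \<in> K \<inter> (K \<union> I - set ps1)" "i' \<in> I \<inter> (K \<union> I - set ps1)"
      using k0 i' i'F by auto
    moreover have "k0 \<noteq> k'" using k0(3) \<open>\<not> adj k' i\<close> by blast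
    ultimately have "adj k0 i'"
      by (intro simplicial_in_K_common_nbr[OF sg s' \<open>k' \<in> K\<close> _ \<open>adj k' i'\<close>])
    moreover have "i' \<in> I \<inter> (K \<union> I - set ps)" using i' i'F xs(2) split by auto
    ultimately have "i' = i" using simplicial_in_unique_I_nbr[OF sg s0 iW0 k0(3)] by blast
    with i' show False by blast
  qed
  have "set ps \<subseteq> F" using xs(2) split by auto
  with K_nonadj I_fos show ?thesis unfolding mem_fos_iff[OF sg] subset_iff by blast
qed

lemma feasible_inter_ufs_is_filter:
  assumes sg: "split_graph K I adj" and i: "i \<in> I"
    and F: "feasible K I adj F" and iF: "i \<notin> F"
  shows "is_filter (prec K I adj) (ufs K I adj i) (F \<inter> ufs K I adj i)"
  unfolding is_filter_def
proof (intro conjI ballI impI)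
  obtain xs where xs: "shelling_seq adj (K \<union> I) xs" "set xs = F"
    using F unfolding feasible_iff_shelling_seq by blast
  fix a b assume a: "a \<in> F \<inter> ufs K I adj i" and b: "b \<in> ufs K I adj i"
    and ab: "prec K I adj a b"
  have "a \<in> K" "b \<in> I" "adj a b" using ab unfolding prec_def by auto
  have "adj a i" using a \<open>a \<in> K\<close> mem_ufs_K_iff[OF sg i] by blast
  have "b \<noteq> i" using b unfolding ufs_def by blast
  obtain ys zs where split: "xs = ys @ a # zs" and s: "simplicial_in adj (K \<union> I - set ys) a"
    using shelling_seqE[OF xs(1)] a xs(2) by blast
  have "b \<in> set ys"
  proof (rule ccontr)
    assume "b \<notin> set ys"
    have "set ys \<subseteq> F" using xs(2) split by auto
    then have "i \<in> I \<inter> (K \<union> I - set ys)" "b \<in> I \<inter> (K \<union> I - set ys)"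
      using i iF \<open>b \<in> I\<close> \<open>b \<notin> set ys\<close> by auto
    then have "b = i" using simplicial_in_unique_I_nbr[OF sg s _ \<open>adj a i\<close> _ \<open>adj a b\<close>] by blast
    with \<open>b \<noteq> i\<close> show False ..
  qed
  then show "b \<in> F \<inter> ufs K I adj i" using b xs(2) split by auto
qed blast

lemma simplicial_in_K_nonadj:
  assumes sg: "split_graph K I adj" and k: "k \<in> K" "\<not> adj k i" "k \<in> W"
    and W: "W \<inter> fos K I adj i \<inter> I = {}"
  shows "simplicial_in adj W k"
proof -
  have "x \<notin> W" if "x \<in> I" "adj k x" for x
  proof -
    have "x \<in> fos K I adj i"
      using that k(2) split_graphD(2,3)[OF sg] unfolding mem_fos_iff[OF sg] by blast
    with W that show ?thesis by blast
  qed
  with k(3) show ?thesis by (auto simp: simplicial_in_K_iff[OF sg k(1)])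
qed

lemma simplicial_in_K_filter:
  assumes sg: "split_graph K I adj"
    and H: "is_filter (prec K I adj) (ufs K I adj i) H" and k: "k \<in> H" "k \<in> K" "k \<in> W"
    and W: "W \<inter> fos K I adj i = {}" "W \<inter> H \<inter> I = {}"
  shows "simplicial_in adj W k"
proof -
  have only_i: "x = i" if x: "x \<in> I \<inter> W" "adj k x" for x
  proof (rule ccontr)
    assume "x \<noteq> i"
    then have "x \<in> ufs K I adj i" using x W(1) unfolding ufs_def by blast
    then have "x \<in> H" using H k x unfolding is_filter_def prec_def by blast
    with x W(2) show False by blast
  qed
  have adj_i: "adj k' i" if "k' \<in> K \<inter> W" for k'
    using that W(1) mem_fos_iff[OF sg] by blast
  show ?thesis
    unfolding simplicial_in_K_iff[OF sg k(2)]
  proof (intro conjI ballI impI)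
    fix x assume "x \<in> I \<inter> W" "adj k x"
    then have "x = i" by (rule only_i)
    show "y = x" if "y \<in> I \<inter> W" "adj k y" for y
      using only_i that \<open>x = i\<close> by blast
    show "adj k' x" if "k' \<in> K \<inter> W" for k'
      using adj_i that \<open>x = i\<close> by blast
  qed fact
qed

lemma fos_union_filter_mem_F_of:
  assumes sg: "split_graph K I adj" and i: "i \<in> I"
    and H: "is_filter (prec K I adj) (ufs K I adj i) H" and HK: "H \<inter> K \<noteq> {}"
  shows "fos K I adj i \<union> H \<in> F_of K I adj i"
proof -
  let ?F = "fos K I adj i \<union> H"
  define A where "A = ?F \<inter> I"
  define B where "B = fos K I adj i \<inter> K"
  define C where "C = H \<inter> K"
  have Hufs: "H \<subseteq> ufs K I adj i" using H unfolding is_filter_def by blast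
  have fin: "finite A" "finite B" "finite C"
    using split_graphD(1)[OF sg] by (simp_all add: A_def B_def C_def)
  have "\<forall>x\<in>A. simplicial_in adj (K \<union> I - {}) x"
    unfolding A_def by (auto intro: simplicial_in_I[OF sg])
  then have "feasible K I adj A"
    using feasible_union_simplicial[OF feasible_empty fin(1)] by simp
  moreover have "simplicial_in adj (K \<union> I - A) k" if "k \<in> B" for k
    using that split_graphD(2)[OF sg] mem_fos_iff[OF sg]
    by (intro simplicial_in_K_nonadj[OF sg]) (auto simp: A_def B_def)
  ultimately have "feasible K I adj (A \<union> B)"
    using feasible_union_simplicial fin(2) by blast
  moreover have "simplicial_in adj (K \<union> I - (A \<union> B)) k" if "k \<in> C" for k
    using that Hufs split_graphD(2)[OF sg] unfolding ufs_def
    by (intro simplicial_in_K_filter[OF sg H]) (auto simp: A_def B_def C_def)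
  ultimately have "feasible K I adj (A \<union> B \<union> C)"
    using feasible_union_simplicial fin(3) by blast
  moreover have "A \<union> B \<union> C = ?F"
  proof -
    have "?F \<subseteq> K \<union> I" using Hufs unfolding fos_def ufs_def by blast
    then show ?thesis unfolding A_def B_def C_def by blast
  qed
  moreover have "i \<in> nbhd K I adj ?F"
  proof -
    obtain k where "k \<in> H" "k \<in> K" using HK by blast
    then have "adj k i" using Hufs mem_ufs_K_iff[OF sg i] by blast
    moreover have "i \<notin> ?F"
      using Hufs i split_graphD(2)[OF sg] mem_fos_iff[OF sg] unfolding ufs_def by blast
    ultimately show ?thesis using i \<open>k \<in> H\<close> unfolding nbhd_def by blast
  qed
  ultimately show ?thesis unfolding F_of_def by simp
qed

lemma mem_F_of_imp_fos_union_filter: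
  assumes sg: "split_graph K I adj" and i: "i \<in> I" and "F \<in> F_of K I adj i"
  shows "\<exists>H. F = fos K I adj i \<union> H \<and> is_filter (prec K I adj) (ufs K I adj i) H \<and> H \<inter> K \<noteq> {}"
proof (intro exI conjI)
  have F: "feasible K I adj F" and iN: "i \<in> nbhd K I adj F"
    using assms(3) unfolding F_of_def by auto
  have iF: "i \<notin> F" using iN unfolding nbhd_def by blast
  show "F = fos K I adj i \<union> (F \<inter> ufs K I adj i)"
    using feasible_subset[OF F] fos_subset_feasible[OF sg i F iN] iF unfolding ufs_def by blast
  show "is_filter (prec K I adj) (ufs K I adj i) (F \<inter> ufs K I adj i)"
    using feasible_inter_ufs_is_filter[OF sg i F iF] .
  obtain u where "u \<in> F" "adj u i" using iN unfolding nbhd_def by blast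
  moreover have "u \<in> K"
    using split_graph_adj_I[OF sg i] split_graphD(3)[OF sg] \<open>adj u i\<close> by blast
  ultimately show "F \<inter> ufs K I adj i \<inter> K \<noteq> {}" using mem_ufs_K_iff[OF sg i] by blast
qed

theorem mainTheorem9:
  fixes K I :: "'a set" and adj :: "'a \<Rightarrow> 'a \<Rightarrow> bool" and i :: 'a
  assumes "split_graph K I adj" and "i \<in> I"
  shows "F_of K I adj i =
    {fos K I adj i \<union> H | H. is_filter (prec K I adj) (ufs K I adj i) H \<and> H \<inter> K \<noteq> {}}"
  using mem_F_of_imp_fos_union_filter[OF assms] fos_union_filter_mem_F_of[OF assms] by blast

end
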